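(* Let $r\ge2$ and let $P,Q$ be a harmonious pair of $r$-patterns. Then for every $k\ge1$, the number of $\{P,Q\}$-cliques among the ordered $r$-matchings on $[rk]$ equals $k!$.
   Context: An ordered $r$-matching of size $k$ is a set of $k$ pairwise disjoint $r$-element subsets (edges) of $[rk]$ (with its natural order). An $r$-pattern is an ordered $r$-matching of size 2, written as a word over $\{A,B\}$ (each letter $r$ times, starting with $A$). Two edges form pattern $P$ if they induce a matching order-isomorphic to $P$; a $\mathcal P$-clique is an ordered matching all of whose pairs of edges form patterns in $\mathcal P$. An $r$-pattern is collectable if it splits into consecutive blocks $S_1\cdots S_s$ each of the form $A^tB^t$ or $B^tA^t$ ($t\ge1$; $W^t$ is $t$ repetitions of $W$); this splitting is unique and its composition is $(|S_1|/2,\dots,|S_s|/2)$. Two distinct collectable $r$-patterns are harmonious if they have the same composition. *)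

theory Defs
  imports Main
begin

text \<open>Words over {A,B} are bool lists: True = A, False = B.\<close>

definition ordered_matching :: "nat \<Rightarrow> nat \<Rightarrow> nat set set \<Rightarrow> bool" where
  "ordered_matching r k M \<longleftrightarrow>
     finite M \<and> card M = k \<and> (\<forall>e\<in>M. e \<subseteq> {1..r*k} \<and> card e = r) \<and> pairwise disjnt M"

definition is_pattern :: "nat \<Rightarrow> bool list \<Rightarrow> bool" where
  "is_pattern r w \<longleftrightarrow> length w = 2*r \<and> count_list w True = r \<and> count_list w False = r
      \<and> w \<noteq> [] \<and> hd w = True"

definition pattern_of :: "nat set \<Rightarrow> nat set \<Rightarrow> bool list" where
  "pattern_of e f = (let U = e \<union> f; E = (if Min U \<in> e then e else f)
                     in map (\<lambda>i. i \<in> E) (sorted_list_of_set U))"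

definition forms :: "nat set \<Rightarrow> nat set \<Rightarrow> bool list \<Rightarrow> bool" where
  "forms e f P \<longleftrightarrow> pattern_of e f = P"

definition is_clique :: "bool list set \<Rightarrow> nat set set \<Rightarrow> bool" where
  "is_clique \<P> M \<longleftrightarrow> (\<forall>e\<in>M. \<forall>f\<in>M. e \<noteq> f \<longrightarrow> (\<exists>P\<in>\<P>. forms e f P))"

definition block :: "bool \<Rightarrow> nat \<Rightarrow> bool list" where
  "block ab t = (if ab then replicate t True @ replicate t False
                else replicate t False @ replicate t True)"

definition has_composition :: "bool list \<Rightarrow> nat list \<Rightarrow> bool" where
  "has_composition w c \<longleftrightarrow> (\<forall>t\<in>set c. t \<ge> 1) \<and>
     (\<exists>os. length os = length c \<and> w = concat (map2 block os c))"

definition collectable :: "nat \<Rightarrow> bool list \<Rightarrow> bool" where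
  "collectable r w \<longleftrightarrow> is_pattern r w \<and> (\<exists>c. has_composition w c)"

definition harmonious :: "nat \<Rightarrow> bool list \<Rightarrow> bool list \<Rightarrow> bool" where
  "harmonious r P Q \<longleftrightarrow> collectable r P \<and> collectable r Q \<and> P \<noteq> Q \<and>
     (\<exists>c. has_composition P c \<and> has_composition Q c)"

end

theory Submission
  imports Defs "HOL-Combinatorics.Permutations"
begin

text \<open>Write \<open>P\<close> and \<open>Q\<close> as concatenations of blocks \<open>A^t B^t\<close> or \<open>B^t A^t\<close> with common
  block lengths \<open>t\<^sub>1, ..., t\<^sub>s\<close>; both start with an \<open>A^t B^t\<close> block and they differ in the
  orientation of some block \<open>j\<close>. In a \<open>{P, Q}\<close>-clique on \<open>[rk]\<close>, counting the numbers below an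
  element edge by edge shows that the \<open>g\<close>-th blocks of all \<open>k\<close> edges fill an interval of
  length \<open>k t\<^sub>g\<close>, each edge taking \<open>t\<^sub>g\<close> consecutive numbers, so an edge is determined by
  its slot in each of these intervals. On blocks where \<open>P\<close> and \<open>Q\<close> agree the slots are ordered
  like those of the first block or reversed, on the others like those of block \<open>j\<close> or
  reversed. Hence a clique is determined by the permutation taking the slots of its edges in the
  first block to their slots in block \<open>j\<close>, and every permutation of \<open>[k]\<close> occurs.\<close>

definition rank :: "nat set \<Rightarrow> nat \<Rightarrow> nat" where
  "rank S x = card {y \<in> S. y < x}"

lemma rank_less_card: "finite S \<Longrightarrow> x \<in> S \<Longrightarrow> rank S x < card S"
  unfolding rank_def by (rule psubset_card_mono) auto

lemma rank_strict_mono: "finite S \<Longrightarrow> x \<in> S \<Longrightarrow> x < y \<Longrightarrow> rank S x < rank S y"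
  unfolding rank_def by (rule psubset_card_mono) auto

lemma strict_mono_on_rank: "finite S \<Longrightarrow> strict_mono_on S (rank S)"
  by (auto intro: strict_mono_onI rank_strict_mono)

lemma rank_image_eq_lessThan: "finite S \<Longrightarrow> rank S ` S = {..<card S}"
proof -
  assume S: "finite S"
  have "rank S ` S \<subseteq> {..<card S}" using rank_less_card[OF S] by auto
  moreover have "card (rank S ` S) = card S"
    using strict_mono_on_imp_inj_on[OF strict_mono_on_rank[OF S]] by (rule card_image)
  ultimately show ?thesis by (simp add: card_subset_eq)
qed

lemma rank_lessThan: "q < n \<Longrightarrow> rank {..<n} q = q"
proof -
  assume "q < n"
  then have "{y \<in> {..<n}. y < q} = {..<q}" by auto
  then show ?thesis unfolding rank_def by simp
qed

lemma rank_atLeastAtMost: "x \<in> {1..n} \<Longrightarrow> rank {1..n} x = x - 1"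
proof -
  assume "x \<in> {1..n}"
  then have "{y \<in> {1..n}. y < x} = {1..<x}" by auto
  then show ?thesis unfolding rank_def by simp
qed

lemma rank_Un_disjoint:
  "finite A \<Longrightarrow> finite B \<Longrightarrow> A \<inter> B = {} \<Longrightarrow> rank (A \<union> B) x = rank A x + rank B x"
  unfolding rank_def by (subst card_Un_disjoint[symmetric]) (auto intro: arg_cong[where f = card])

lemma rank_Union_disjoint:
  assumes "finite M" "\<And>e. e \<in> M \<Longrightarrow> finite e" "pairwise disjnt M"
  shows "rank (\<Union>M) x = (\<Sum>e\<in>M. rank e x)"
proof -
  have "rank (\<Union>M) x = card (\<Union>e\<in>M. {y \<in> e. y < x})"
    unfolding rank_def by (rule arg_cong[where f = card]) auto
  also have "\<dots> = (\<Sum>e\<in>M. rank e x)"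
    unfolding rank_def using assms by (intro card_UN_disjoint) (auto simp: pairwise_def disjnt_def)
  finally show ?thesis .
qed

lemma rank_image_inj: "inj_on h A \<Longrightarrow> rank (h ` A) x = card {a \<in> A. h a < x}"
proof -
  assume inj: "inj_on h A"
  have "{y \<in> h ` A. y < x} = h ` {a \<in> A. h a < x}" by auto
  moreover have "inj_on h {a \<in> A. h a < x}" using inj by (rule inj_on_subset) auto
  ultimately show ?thesis unfolding rank_def by (simp add: card_image)
qed

lemma rank_image_strict_mono:
  assumes "strict_mono_on A h" "a \<in> A"
  shows "rank (h ` A) (h a) = rank A a"
proof -
  have "rank (h ` A) (h a) = card {x \<in> A. h x < h a}"
    by (rule rank_image_inj[OF strict_mono_on_imp_inj_on[OF assms(1)]])
  also have "{x \<in> A. h x < h a} = {x \<in> A. x < a}"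
    using strict_mono_on_less[OF assms(1) _ assms(2)] by auto
  finally show ?thesis by (simp add: rank_def)
qed

lemma strict_mono_on_nth_sorted_list_of_set:
  "strict_mono_on {..<card S} (\<lambda>n. sorted_list_of_set S ! n)"
  by (rule strict_mono_onI) (simp add: sorted_wrt_nth_less)

lemma image_nth_sorted_list_of_set:
  assumes "finite S"
  shows "(\<lambda>n. sorted_list_of_set S ! n) ` {..<card S} = S"
proof -
  have "(\<lambda>n. sorted_list_of_set S ! n) ` {..<length (sorted_list_of_set S)}
      = set (sorted_list_of_set S)"
    by (auto simp: in_set_conv_nth)
  then show ?thesis using assms by simp
qed

lemma rank_nth_sorted_list_of_set:
  assumes "finite S" "n < card S"
  shows "rank S (sorted_list_of_set S ! n) = n"
proof -
  have "rank ((\<lambda>n. sorted_list_of_set S ! n) ` {..<card S}) (sorted_list_of_set S ! n) = n"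
    using rank_image_strict_mono[OF strict_mono_on_nth_sorted_list_of_set, where a = n] assms(2)
    by (simp add: rank_lessThan)
  then show ?thesis using image_nth_sorted_list_of_set[OF assms(1)] by simp
qed

lemma nth_sorted_list_of_set_rank:
  assumes "finite S" "x \<in> S"
  shows "sorted_list_of_set S ! rank S x = x"
proof -
  obtain n where "n < card S" "x = sorted_list_of_set S ! n"
    using assms image_nth_sorted_list_of_set[OF assms(1)] by (metis imageE lessThan_iff)
  then show ?thesis using rank_nth_sorted_list_of_set[OF assms(1)] by simp
qed

lemma strict_mono_image_eq_iff:
  fixes h h' :: "nat \<Rightarrow> nat"
  assumes A: "finite A" "card A = n"
    and h: "strict_mono_on A h" and h': "strict_mono_on {..<n} h'"
  shows "h ` A = h' ` {..<n} \<longleftrightarrow> (\<forall>x\<in>A. h x = h' (rank A x))"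
proof
  assume eq: "h ` A = h' ` {..<n}"
  show "\<forall>x\<in>A. h x = h' (rank A x)"
  proof
    fix x assume x: "x \<in> A"
    have q: "rank A x < n" using rank_less_card[OF A(1) x] A(2) by simp
    have "rank (h ` A) (h x) = rank (h ` A) (h' (rank A x))"
      using rank_image_strict_mono[OF h x] rank_image_strict_mono[OF h', of "rank A x"] q
      by (simp add: eq rank_lessThan)
    moreover have "h x \<in> h ` A" "h' (rank A x) \<in> h ` A" using x q eq by auto
    ultimately show "h x = h' (rank A x)"
      using inj_onD[OF strict_mono_on_imp_inj_on[OF strict_mono_on_rank[OF finite_imageI[OF A(1)]]]]
      by blast
  qed
next
  assume "\<forall>x\<in>A. h x = h' (rank A x)"
  then have "h ` A = h' ` rank A ` A" by (simp add: image_image)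
  then show "h ` A = h' ` {..<n}" using rank_image_eq_lessThan[OF A(1)] A(2) by simp
qed

definition block_word :: "bool list \<Rightarrow> nat list \<Rightarrow> bool list" where
  "block_word os c = concat (map2 block os c)"

fun block_of :: "nat list \<Rightarrow> nat \<Rightarrow> nat" where
  "block_of [] q = 0"
| "block_of (t # c) q = (if q < t then 0 else Suc (block_of c (q - t)))"

definition block_start :: "nat list \<Rightarrow> nat \<Rightarrow> nat" where
  "block_start c g = sum_list (take g c)"

text \<open>The number of letters B in \<open>block_word os c\<close> before its \<open>q\<close>-th letter A
  (counting from 0).\<close>
definition b_before :: "bool list \<Rightarrow> nat list \<Rightarrow> nat \<Rightarrow> nat" where
  "b_before os c q =
     block_start c (block_of c q) + (if os ! block_of c q then 0 else c ! block_of c q)"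

lemma block_word_Nil [simp]: "block_word [] [] = []"
  by (simp add: block_word_def)

lemma block_word_Cons [simp]: "block_word (b # os) (t # c) = block b t @ block_word os c"
  by (simp add: block_word_def)

lemma length_block_word: "length os = length c \<Longrightarrow> length (block_word os c) = 2 * sum_list c"
  by (induction os c rule: list_induct2) (auto simp: block_def)

lemma block_word_map_Not:
  "length os = length c \<Longrightarrow> block_word (map Not os) c = map Not (block_word os c)"
  by (induction os c rule: list_induct2) (auto simp: block_def)

lemma hd_block_word:
  "length os = length c \<Longrightarrow> os \<noteq> [] \<Longrightarrow> hd c > 0 \<Longrightarrow> hd (block_word os c) = hd os"
  by (cases os; cases c) (auto simp: block_def)

lemma length_filter_block_word:
  "length os = length c \<Longrightarrow> length (filter id (block_word os c)) = sum_list c"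
  by (induction os c rule: list_induct2) (auto simp: block_def)

lemma block_start_0 [simp]: "block_start c 0 = 0"
  by (simp add: block_start_def)

lemma block_start_Cons_Suc [simp]: "block_start (t # c) (Suc g) = t + block_start c g"
  by (simp add: block_start_def)

lemma block_start_Suc: "g < length c \<Longrightarrow> block_start c (Suc g) = block_start c g + c ! g"
  by (simp add: block_start_def take_Suc_conv_app_nth)

lemma block_start_mono: "g \<le> g' \<Longrightarrow> block_start c g \<le> block_start c g'"
  unfolding block_start_def by (metis le_add1 sum_list_append take_add le_Suc_ex)

lemma block_start_le_sum_list: "block_start c g \<le> sum_list c"
  unfolding block_start_def by (metis append_take_drop_id le_add1 sum_list_append)

lemma block_of_bounds:
  "q < sum_list c \<Longrightarrow>
     block_of c q < length c \<and> block_start c (block_of c q) \<le> q \<and>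
     q < block_start c (block_of c q) + c ! block_of c q"
proof (induction c arbitrary: q)
  case (Cons t c)
  show ?case
  proof (cases "q < t")
    case False
    then have "q - t < sum_list c" using Cons.prems by simp
    from Cons.IH[OF this] False show ?thesis by auto
  qed simp
qed simp

lemma block_of_eqI:
  "g < length c \<Longrightarrow> block_start c g \<le> q \<Longrightarrow> q < block_start c g + c ! g \<Longrightarrow> block_of c q = g"
proof (induction c arbitrary: g q)
  case (Cons t c)
  then show ?case by (cases g) force+
qed simp

lemma block_start_less_sum_list: "g < length c \<Longrightarrow> c ! g > 0 \<Longrightarrow> block_start c g < sum_list c"
  using block_start_Suc[of g c] block_start_le_sum_list[of c "Suc g"] by simp

lemma block_of_block_start: "g < length c \<Longrightarrow> c ! g > 0 \<Longrightarrow> block_of c (block_start c g) = g"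
  by (rule block_of_eqI) auto

lemma block_of_less_iff:
  assumes "q < sum_list c" "g \<le> length c"
  shows "block_of c q < g \<longleftrightarrow> q < block_start c g"
proof
  assume "block_of c q < g"
  then have "block_start c (Suc (block_of c q)) \<le> block_start c g" by (intro block_start_mono) simp
  then show "q < block_start c g" using block_of_bounds[OF assms(1)] by (simp add: block_start_Suc)
next
  assume "q < block_start c g"
  then show "block_of c q < g"
    using block_of_bounds[OF assms(1)] block_start_mono[of g "block_of c q" c] by linarith
qed

lemma block_of_mono:
  assumes "q \<le> q'" "q' < sum_list c"
  shows "block_of c q \<le> block_of c q'"
proof -
  have "block_start c (block_of c q) \<le> q" "block_of c q < length c"
    using block_of_bounds[of q c] assms by auto
  then show ?thesis using block_of_less_iff[OF assms(2), of "block_of c q"] assms(1) by linarith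
qed

lemma b_before_Cons:
  "b_before (b # os) (t # c) q =
     (if q < t then (if b then 0 else t) else t + b_before os c (q - t))"
  by (simp add: b_before_def)

lemma nth_block_word_b_before:
  "length os = length c \<Longrightarrow> q < sum_list c \<Longrightarrow>
     q + b_before os c q < 2 * sum_list c \<and> block_word os c ! (q + b_before os c q)"
proof (induction os c arbitrary: q rule: list_induct2)
  case (Cons b os t c)
  show ?case
  proof (cases "q < t")
    case True
    then show ?thesis by (auto simp: b_before_Cons block_def nth_append)
  next
    case False
    then have "q - t < sum_list c" using Cons.prems by simp
    with Cons.IH[OF this] False show ?thesis by (auto simp: b_before_Cons block_def nth_append)
  qed
qed simp

lemma strict_mono_on_b_before:
  "length os = length c \<Longrightarrow> strict_mono_on {..<sum_list c} (\<lambda>q. q + b_before os c q)"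
proof (induction os c rule: list_induct2)
  case (Cons b os t c)
  show ?case
  proof (rule strict_mono_onI)
    fix q q' assume q: "q' \<in> {..<sum_list (t # c)}" "q < q'"
    show "q + b_before (b # os) (t # c) q < q' + b_before (b # os) (t # c) q'"
    proof (cases "q < t")
      case False
      then have "q - t < q' - t" "q' - t \<in> {..<sum_list c}" using q by auto
      then have "q - t + b_before os c (q - t) < q' - t + b_before os c (q' - t)"
        by (intro strict_mono_onD[OF Cons.IH]) auto
      then show ?thesis using False q by (simp add: b_before_Cons)
    qed (use q in \<open>auto simp: b_before_Cons\<close>)
  qed
qed simp

lemma true_positions_block_word:
  assumes "length os = length c"
  shows "{n. n < length (block_word os c) \<and> block_word os c ! n}
      = (\<lambda>q. q + b_before os c q) ` {..<sum_list c}"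
proof (rule sym, rule card_subset_eq)
  show "(\<lambda>q. q + b_before os c q) ` {..<sum_list c}
      \<subseteq> {n. n < length (block_word os c) \<and> block_word os c ! n}"
    using nth_block_word_b_before[OF assms] length_block_word[OF assms] by auto
  show "card ((\<lambda>q. q + b_before os c q) ` {..<sum_list c})
      = card {n. n < length (block_word os c) \<and> block_word os c ! n}"
    using card_image[OF strict_mono_on_imp_inj_on[OF strict_mono_on_b_before[OF assms]]]
      length_filter_block_word[OF assms] by (simp add: length_filter_conv_card)
qed simp

lemma bool_list_eq_iff_true_positions:
  "xs = ys \<longleftrightarrow>
     length xs = length ys \<and> {n. n < length xs \<and> xs ! n} = {n. n < length ys \<and> ys ! n}"
proof (intro iffI conjI; (elim conjE)?)
  assume len: "length xs = length ys"
    and T: "{n. n < length xs \<and> xs ! n} = {n. n < length ys \<and> ys ! n}"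
  show "xs = ys"
  proof (rule nth_equalityI)
    fix n assume "n < length xs"
    moreover have "n \<in> {n. n < length xs \<and> xs ! n} \<longleftrightarrow> n \<in> {n. n < length ys \<and> ys ! n}"
      using T by simp
    ultimately show "xs ! n = ys ! n" using len by simp
  qed (rule len)
qed simp_all

definition rel_word :: "nat set \<Rightarrow> nat set \<Rightarrow> bool list" where
  "rel_word e f = map (\<lambda>i. i \<in> e) (sorted_list_of_set (e \<union> f))"

lemma true_positions_rel_word:
  assumes "finite e" "finite f"
  shows "{n. n < length (rel_word e f) \<and> rel_word e f ! n} = rank (e \<union> f) ` e"
proof -
  have U: "finite (e \<union> f)" using assms by simp
  show ?thesis
  proof (intro set_eqI iffI)
    fix n assume "n \<in> {n. n < length (rel_word e f) \<and> rel_word e f ! n}"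
    then have "n < card (e \<union> f)" "sorted_list_of_set (e \<union> f) ! n \<in> e"
      by (auto simp: rel_word_def)
    then show "n \<in> rank (e \<union> f) ` e"
      using rank_nth_sorted_list_of_set[OF U] by (metis image_eqI)
  next
    fix n assume "n \<in> rank (e \<union> f) ` e"
    then obtain x where "x \<in> e" "n = rank (e \<union> f) x" by blast
    then show "n \<in> {n. n < length (rel_word e f) \<and> rel_word e f ! n}"
      using rank_less_card[OF U] nth_sorted_list_of_set_rank[OF U] by (simp add: rel_word_def)
  qed
qed

lemma rel_word_eq_block_word_iff:
  assumes fin: "finite e" "finite f" and disj: "e \<inter> f = {}"
    and card: "card e = sum_list c" "card f = sum_list c" and os: "length os = length c"
  shows "rel_word e f = block_word os c \<longleftrightarrow> (\<forall>x\<in>e. rank f x = b_before os c (rank e x))"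
proof -
  have "length (rel_word e f) = length (block_word os c)"
    using card_Un_disjoint[OF fin disj] card length_block_word[OF os] by (simp add: rel_word_def)
  then have "rel_word e f = block_word os c \<longleftrightarrow>
      rank (e \<union> f) ` e = (\<lambda>q. q + b_before os c q) ` {..<sum_list c}"
    unfolding bool_list_eq_iff_true_positions[of "rel_word e f"]
      true_positions_rel_word[OF fin] true_positions_block_word[OF os] by simp
  also have "\<dots> \<longleftrightarrow> (\<forall>x\<in>e. rank (e \<union> f) x = rank e x + b_before os c (rank e x))"
    using fin card strict_mono_on_b_before[OF os]
    by (intro strict_mono_image_eq_iff) (auto intro: strict_mono_onI rank_strict_mono)
  also have "\<dots> \<longleftrightarrow> (\<forall>x\<in>e. rank f x = b_before os c (rank e x))"
    using rank_Un_disjoint[OF fin disj] by simp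
  finally show ?thesis .
qed

lemma pattern_of_conv_rel_word:
  assumes fin: "finite e" "finite f" and disj: "e \<inter> f = {}" and ne: "e \<noteq> {}" "f \<noteq> {}"
  shows "pattern_of e f = (if Min e < Min f then rel_word e f else map Not (rel_word e f))"
proof -
  have mins: "Min e \<in> e" "Min f \<in> f" using fin ne by simp_all
  have "Min (e \<union> f) = min (Min e) (Min f)" using fin ne by (simp add: Min_Un)
  then have "Min (e \<union> f) \<in> e \<longleftrightarrow> Min e < Min f" using mins disj by (auto simp: min_def)
  moreover have "map (\<lambda>i. i \<in> f) (sorted_list_of_set (e \<union> f)) = map Not (rel_word e f)"
    using fin disj by (auto simp: rel_word_def)
  ultimately show ?thesis by (auto simp: pattern_of_def rel_word_def Let_def sup_commute)
qed

lemma pattern_of_eq_block_word_iff: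
  assumes fin: "finite e" "finite f" and disj: "e \<inter> f = {}" and ne: "e \<noteq> {}"
    and card: "card e = sum_list c" "card f = sum_list c" and os: "length os = length c"
  shows "pattern_of e f = block_word os c \<longleftrightarrow>
    (\<forall>x\<in>e. rank f x = b_before (if Min e < Min f then os else map Not os) c (rank e x))"
proof -
  have "card e > 0" using ne fin by (simp add: card_gt_0_iff)
  then have "card f > 0" using card by simp
  then have "f \<noteq> {}" by (simp add: card_gt_0_iff)
  moreover have "map Not xs = block_word os c \<longleftrightarrow> xs = block_word (map Not os) c" for xs
  proof -
    have inv: "map Not (map Not ys) = ys" for ys :: "bool list" by (simp add: comp_def)
    show ?thesis unfolding block_word_map_Not[OF os] by (metis inv)
  qed
  ultimately have "pattern_of e f = block_word os c \<longleftrightarrow>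
      rel_word e f = block_word (if Min e < Min f then os else map Not os) c"
    using pattern_of_conv_rel_word[OF fin disj ne] by simp
  then show ?thesis using rel_word_eq_block_word_iff[OF fin disj card] os by simp
qed

lemma mult_add_less_mult_add_iff:
  fixes t s s' i i' :: nat
  assumes "i < t" "i' < t"
  shows "t * s + i < t * s' + i' \<longleftrightarrow> s < s' \<or> s = s' \<and> i < i'"
proof -
  have less: "t * s + i < t * s' + i'" if "s < s'" "i < t" for s s' i i' :: nat
  proof -
    have "t * s + i < t * Suc s" using that by simp
    also have "\<dots> \<le> t * s'" using that by (intro mult_le_mono2) simp
    finally show ?thesis by simp
  qed
  show ?thesis
    using assms less[of s s' i i'] less[of s' s i' i] by (cases s s' rule: linorder_cases) auto
qed

lemma card_filter_eq:
  "finite A \<Longrightarrow>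
    card {x \<in> A. P x = b} = (if b then card {x \<in> A. P x} else card A - card {x \<in> A. P x})"
proof -
  assume "finite A"
  moreover have "{x \<in> A. \<not> P x} = A - {x \<in> A. P x}" by auto
  ultimately show ?thesis by (simp add: card_Diff_subset)
qed

text \<open>\<open>oP\<close> and \<open>oQ\<close> are the block orientations of \<open>P = block_word oP c\<close> and
  \<open>Q = block_word oQ c\<close> (\<open>True\<close> for \<open>A^t B^t\<close>), and \<open>j\<close> is a block on which they differ.\<close>
locale harmonious_blocks =
  fixes r :: nat and c :: "nat list" and oP oQ :: "bool list" and j k :: nat
  assumes length_oP: "length oP = length c" and length_oQ: "length oQ = length c"
    and parts_pos: "\<forall>t\<in>set c. t > 0" and sum_c: "sum_list c = r"
    and j: "j < length c" "oP ! j \<noteq> oQ ! j"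
    and oP_0: "oP ! 0" and oQ_0: "oQ ! 0"
begin

definition PQ_clique :: "nat set set \<Rightarrow> bool" where
  "PQ_clique M \<longleftrightarrow> ordered_matching r k M \<and> is_clique {block_word oP c, block_word oQ c} M"

lemma c_nth_pos: "g < length c \<Longrightarrow> c ! g > 0"
  using parts_pos by simp

lemma length_c_pos: "length c > 0"
  using j(1) by linarith

lemma r_pos: "r > 0"
  using sum_c c_nth_pos[OF length_c_pos] elem_le_sum_list[OF length_c_pos] by simp

lemma block_bounds:
  "q < r \<Longrightarrow> block_of c q < length c \<and> block_start c (block_of c q) \<le> q \<and>
     q < block_start c (block_of c q) + c ! block_of c q"
  using block_of_bounds[of q c] sum_c by simp

text \<open>In a \<open>{P, Q}\<close>-clique the \<open>g\<close>-th blocks of the \<open>k\<close> edges fill the interval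
  \<open>(k * block_start c g, k * block_start c (g + 1)]\<close>, each edge taking \<open>c ! g\<close> consecutive
  numbers; \<open>cell g s i\<close> is the \<open>i\<close>-th of them for the edge in slot \<open>s\<close>.\<close>
definition cell :: "nat \<Rightarrow> nat \<Rightarrow> nat \<Rightarrow> nat" where
  "cell g s i = k * block_start c g + c ! g * s + i + 1"

lemma cell_le: "g < length c \<Longrightarrow> s < k \<Longrightarrow> i < c ! g \<Longrightarrow> cell g s i \<le> k * block_start c (Suc g)"
  using mult_le_mono2[of "Suc s" k "c ! g"]
  by (simp add: cell_def block_start_Suc algebra_simps)

lemma cell_less_iff:
  assumes "g < length c" "g' < length c" "s < k" "s' < k" "i < c ! g" "i' < c ! g'"
  shows "cell g s i < cell g' s' i' \<longleftrightarrow> g < g' \<or> g = g' \<and> (s < s' \<or> s = s' \<and> i < i')"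
proof -
  have below: "cell g s i < cell g' s' i'" if "g < g'" "g < length c" "s < k" "i < c ! g"
    for g g' s s' i i'
  proof -
    have "cell g s i \<le> k * block_start c (Suc g)" using that by (intro cell_le)
    also have "\<dots> \<le> k * block_start c g'" using that by (intro mult_le_mono2 block_start_mono) simp
    finally show ?thesis by (simp add: cell_def)
  qed
  consider "g < g'" | "g' < g" | "g = g'" by linarith
  then show ?thesis
  proof cases
    case 1 then show ?thesis using below[of g g' s i s' i'] assms by simp
  next
    case 2 then show ?thesis using below[of g' g s' i' s i] assms by simp
  next
    case 3
    then show ?thesis
      using assms mult_add_less_mult_add_iff[of i "c ! g" i' s s'] by (simp add: cell_def)
  qed
qed

definition edge_elem :: "(nat \<Rightarrow> nat) \<Rightarrow> nat \<Rightarrow> nat" where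
  "edge_elem p q = cell (block_of c q) (p (block_of c q)) (q - block_start c (block_of c q))"

definition edge :: "(nat \<Rightarrow> nat) \<Rightarrow> nat set" where
  "edge p = edge_elem p ` {..<r}"

definition valid_slots :: "(nat \<Rightarrow> nat) \<Rightarrow> bool" where
  "valid_slots p \<longleftrightarrow> (\<forall>g < length c. p g < k)"

lemma edge_elem_less_iff:
  assumes "q < r" "q' < r" "valid_slots p" "valid_slots p'"
  shows "edge_elem p q < edge_elem p' q' \<longleftrightarrow>
    block_of c q < block_of c q' \<or>
    block_of c q = block_of c q' \<and> (p (block_of c q) < p' (block_of c q) \<or>
      p (block_of c q) = p' (block_of c q) \<and> q < q')"
  using block_bounds[OF assms(1)] block_bounds[OF assms(2)] assms(3,4)
  unfolding edge_elem_def valid_slots_def by (subst cell_less_iff) auto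

lemma edge_elem_eq_iff:
  assumes "q < r" "q' < r" "valid_slots p" "valid_slots p'"
  shows "edge_elem p q = edge_elem p' q' \<longleftrightarrow> q = q' \<and> p (block_of c q) = p' (block_of c q)"
proof
  assume "edge_elem p q = edge_elem p' q'"
  then have "\<not> edge_elem p q < edge_elem p' q'" "\<not> edge_elem p' q' < edge_elem p q" by simp_all
  then show "q = q' \<and> p (block_of c q) = p' (block_of c q)"
    unfolding edge_elem_less_iff[OF assms] edge_elem_less_iff[OF assms(2,1,4,3)] by auto
qed (auto simp: edge_elem_def)

lemma edge_elem_block_start:
  "g < length c \<Longrightarrow> edge_elem p (block_start c g) = cell g (p g) 0"
  by (simp add: edge_elem_def block_of_block_start c_nth_pos)

lemma strict_mono_on_edge_elem: "valid_slots p \<Longrightarrow> strict_mono_on {..<r} (edge_elem p)"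
proof (rule strict_mono_onI)
  fix q q' assume p: "valid_slots p" and q: "q \<in> {..<r}" "q' \<in> {..<r}" "q < q'"
  then have "block_of c q \<le> block_of c q'" using block_of_mono[of q q' c] sum_c by simp
  then show "edge_elem p q < edge_elem p q'" using q edge_elem_less_iff[of q q' p p] p by auto
qed

lemma card_edge: "valid_slots p \<Longrightarrow> card (edge p) = r"
  unfolding edge_def
  by (subst card_image[OF strict_mono_on_imp_inj_on[OF strict_mono_on_edge_elem]]) simp_all

lemma edge_subset: "valid_slots p \<Longrightarrow> edge p \<subseteq> {1..r * k}"
proof
  fix x assume p: "valid_slots p" and "x \<in> edge p"
  then obtain q where q: "q < r" "x = edge_elem p q" by (auto simp: edge_def)
  let ?g = "block_of c q"
  have "x \<le> k * block_start c (Suc ?g)"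
    using block_bounds[OF q(1)] p unfolding q(2) edge_elem_def valid_slots_def
    by (intro cell_le) auto
  also have "\<dots> \<le> k * r" using block_start_le_sum_list[of c] sum_c by simp
  finally show "x \<in> {1..r * k}" using q(2) by (simp add: edge_elem_def cell_def mult.commute)
qed

lemma Min_edge: "valid_slots p \<Longrightarrow> Min (edge p) = c ! 0 * p 0 + 1"
proof -
  assume p: "valid_slots p"
  have "Min (edge p) = edge_elem p 0"
    using r_pos strict_mono_onD[OF strict_mono_on_edge_elem[OF p], of 0] unfolding edge_def
    by (intro Min_eqI) (auto simp: le_less)
  then show ?thesis using edge_elem_block_start[OF length_c_pos, of p] by (simp add: cell_def)
qed

lemma rank_edge_edge_elem: "valid_slots p \<Longrightarrow> q < r \<Longrightarrow> rank (edge p) (edge_elem p q) = q"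
  unfolding edge_def
  by (simp add: rank_image_strict_mono[OF strict_mono_on_edge_elem] rank_lessThan)

lemma rank_other_edge:
  assumes p: "valid_slots p" "valid_slots p'" and q: "q < r"
    and ne: "p (block_of c q) \<noteq> p' (block_of c q)"
  shows "rank (edge p') (edge_elem p q)
    = block_start c (block_of c q)
      + (if p' (block_of c q) < p (block_of c q) then c ! block_of c q else 0)"
    (is "_ = ?N")
proof -
  let ?g = "block_of c q"
  have "{q' \<in> {..<r}. edge_elem p' q' < edge_elem p q} = {..<?N}"
  proof -
    have "edge_elem p' q' < edge_elem p q \<longleftrightarrow> q' < ?N" if "q' < r" for q'
      using edge_elem_less_iff[OF that q p(2,1)] ne block_bounds[OF q] block_bounds[OF that]
        block_of_less_iff[of q' c ?g] block_of_eqI[of ?g c q'] sum_c that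
      by (auto simp: not_less)
    moreover have "?N \<le> r"
      using block_bounds[OF q] block_start_Suc[of ?g c] block_start_le_sum_list[of c "Suc ?g"] sum_c
      by auto
    ultimately show ?thesis by auto
  qed
  then show ?thesis
    using rank_image_inj[OF strict_mono_on_imp_inj_on[OF strict_mono_on_edge_elem[OF p(2)]]]
    by (simp add: edge_def)
qed

lemma edges_disjoint:
  assumes "valid_slots p" "valid_slots p'" "\<And>g. g < length c \<Longrightarrow> p g \<noteq> p' g"
  shows "edge p \<inter> edge p' = {}"
  using edge_elem_eq_iff[OF _ _ assms(1,2)] block_bounds assms(3) by (force simp: edge_def)

lemma edge_eqD:
  assumes p: "valid_slots p" "valid_slots p'" and eq: "edge p = edge p'" and g: "g < length c"
  shows "p g = p' g"
proof -
  have g_start: "block_start c g < r" "block_of c (block_start c g) = g"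
    using block_start_less_sum_list[OF g] block_of_block_start[OF g] c_nth_pos[OF g] sum_c
    by simp_all
  then have "edge_elem p (block_start c g) \<in> edge p'" using eq by (auto simp: edge_def)
  then obtain q' where "q' < r" "edge_elem p (block_start c g) = edge_elem p' q'"
    by (auto simp: edge_def)
  then show ?thesis using edge_elem_eq_iff[OF g_start(1) _ p] g_start(2) by simp
qed

lemma edge_cong: "(\<And>g. g < length c \<Longrightarrow> p g = p' g) \<Longrightarrow> edge p = edge p'"
  unfolding edge_def edge_elem_def using block_bounds by (intro image_cong) auto

lemma pattern_of_edges:
  assumes p: "valid_slots p" "valid_slots p'" and ne: "\<And>g. g < length c \<Longrightarrow> p g \<noteq> p' g"
  shows "pattern_of (edge p) (edge p')
    = block_word (map (\<lambda>g. p g < p' g \<longleftrightarrow> p 0 < p' 0) [0..<length c]) c"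
proof -
  let ?os = "map (\<lambda>g. p g < p' g \<longleftrightarrow> p 0 < p' 0) [0..<length c]"
  have "Min (edge p) < Min (edge p') \<longleftrightarrow> p 0 < p' 0"
    using Min_edge[OF p(1)] Min_edge[OF p(2)] c_nth_pos[OF length_c_pos] by simp
  then have os: "(if Min (edge p) < Min (edge p') then ?os else map Not ?os) ! g = (p g < p' g)"
    if "g < length c" for g
    using that by auto
  have "rank (edge p') x = b_before (if Min (edge p) < Min (edge p') then ?os else map Not ?os) c
      (rank (edge p) x)" if "x \<in> edge p" for x
  proof -
    obtain q where q: "q < r" "x = edge_elem p q" using \<open>x \<in> edge p\<close> by (auto simp: edge_def)
    then show ?thesis
      using rank_edge_edge_elem[OF p(1) q(1)] rank_other_edge[OF p q(1)] block_bounds[OF q(1)]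
        os[of "block_of c q"] ne[of "block_of c q"] by (auto simp: b_before_def)
  qed
  moreover have "card (edge p) = sum_list c" "card (edge p') = sum_list c"
    using card_edge p sum_c by simp_all
  moreover have "edge p \<noteq> {}" using card_edge[OF p(1)] r_pos by auto
  ultimately show ?thesis
    using pattern_of_eq_block_word_iff[OF _ _ edges_disjoint[OF p ne]] by (simp add: edge_def)
qed

text \<open>The slot in block \<open>g\<close> of the edge occupying slot \<open>a\<close> of block 0 and slot \<open>b\<close>
  of block \<open>j\<close>: blocks on which \<open>P\<close> and \<open>Q\<close> agree are ordered like block 0 or reversed,
  the other blocks like block \<open>j\<close> or reversed.\<close>
definition slot :: "nat \<Rightarrow> nat \<Rightarrow> nat \<Rightarrow> nat" where
  "slot a b g = (if oP ! g = oQ ! g then (if oP ! g then a else k - 1 - a)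
                 else (if oP ! g = oP ! j then b else k - 1 - b))"

lemma slot_0 [simp]: "slot a b 0 = a"
  using oP_0 oQ_0 by (simp add: slot_def)

lemma slot_j [simp]: "slot a b j = b"
  using j(2) by (simp add: slot_def)

lemma valid_slots_slot: "a < k \<Longrightarrow> b < k \<Longrightarrow> valid_slots (slot a b)"
  by (auto simp: valid_slots_def slot_def)

lemma slot_neq:
  assumes "a < k" "a' < k" "b < k" "b' < k" "a \<noteq> a'" "b \<noteq> b'"
  shows "slot a b g \<noteq> slot a' b' g"
proof -
  have rev: "k - 1 - x \<noteq> k - 1 - y" if "x < k" "y < k" "x \<noteq> y" for x y
    using that by linarith
  show ?thesis unfolding slot_def using assms rev[of a a'] rev[of b b'] by auto
qed

lemma slot_less_slot_iff:
  assumes "a < k" "a' < k" "b < k" "b' < k" "a \<noteq> a'" "b \<noteq> b'"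
  shows "slot a b g < slot a' b' g \<longleftrightarrow>
    (if oP ! g = oQ ! g then a < a' \<longleftrightarrow> oP ! g else b < b' \<longleftrightarrow> (oP ! g \<longleftrightarrow> oP ! j))"
proof -
  have rev: "k - 1 - x < k - 1 - y \<longleftrightarrow> \<not> x < y" if "x < k" "y < k" "x \<noteq> y" for x y
    using that by linarith
  show ?thesis unfolding slot_def using assms rev[of a a'] rev[of b b'] by auto
qed

lemma orientation_slot:
  assumes "a < k" "a' < k" "b < k" "b' < k" "a \<noteq> a'" "b \<noteq> b'"
  shows "map (\<lambda>g. slot a b g < slot a' b' g \<longleftrightarrow> slot a b 0 < slot a' b' 0) [0..<length c]
    = (if (a < a' \<longleftrightarrow> b < b') \<longleftrightarrow> oP ! j then oP else oQ)"
    (is "?os = ?o")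
proof (rule nth_equalityI)
  fix g assume "g < length ?os"
  then show "?os ! g = ?o ! g"
    using slot_less_slot_iff[OF assms, of g] slot_less_slot_iff[OF assms, of 0] oP_0 oQ_0 by auto
qed (simp add: length_oP length_oQ)

definition matching_of :: "(nat \<Rightarrow> nat) \<Rightarrow> nat set set" where
  "matching_of \<pi> = (\<lambda>a. edge (slot a (\<pi> a))) ` {..<k}"

lemma valid_slots_perm: "\<pi> permutes {..<k} \<Longrightarrow> a < k \<Longrightarrow> valid_slots (slot a (\<pi> a))"
  using permutes_in_image[of \<pi> "{..<k}" a] by (simp add: valid_slots_slot)

lemma slot_perm_neq:
  assumes "\<pi> permutes {..<k}" "a < k" "a' < k" "a \<noteq> a'"
  shows "slot a (\<pi> a) g \<noteq> slot a' (\<pi> a') g"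
  using assms permutes_in_image[OF assms(1)] permutes_inj[OF assms(1)]
  by (intro slot_neq) (auto dest: injD)

lemma PQ_clique_matching_of:
  assumes \<pi>: "\<pi> permutes {..<k}"
  shows "PQ_clique (matching_of \<pi>)"
proof -
  let ?E = "\<lambda>a. edge (slot a (\<pi> a))"
  note valid = valid_slots_perm[OF \<pi>]
  have disj: "?E a \<inter> ?E a' = {}" if "a < k" "a' < k" "a \<noteq> a'" for a a'
    using that slot_perm_neq[OF \<pi>] by (intro edges_disjoint valid) auto
  have nonempty: "?E a \<noteq> {}" if "a < k" for a
    using card_edge[OF valid[OF that]] r_pos by auto
  have inj: "inj_on ?E {..<k}"
    by (rule inj_onI) (use disj nonempty in \<open>fastforce\<close>)
  have "pairwise disjnt (?E ` {..<k})"
    unfolding pairwise_image pairwise_def disjnt_def using disj by blast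
  then have "ordered_matching r k (matching_of \<pi>)"
    unfolding ordered_matching_def matching_of_def
    using card_image[OF inj] edge_subset[OF valid] card_edge[OF valid] by auto
  moreover have "is_clique {block_word oP c, block_word oQ c} (matching_of \<pi>)"
    unfolding is_clique_def forms_def matching_of_def
  proof (intro ballI impI)
    fix e f assume "e \<in> ?E ` {..<k}" "f \<in> ?E ` {..<k}" "e \<noteq> f"
    then obtain a a' where a: "a < k" "a' < k" "a \<noteq> a'" "e = ?E a" "f = ?E a'" by auto
    have "pattern_of e f = block_word (if (a < a' \<longleftrightarrow> \<pi> a < \<pi> a') \<longleftrightarrow> oP ! j then oP else oQ) c"
      using pattern_of_edges[OF valid valid slot_perm_neq[OF \<pi>]] orientation_slot
        permutes_in_image[OF \<pi>] permutes_inj[OF \<pi>] a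
      by (simp add: inj_eq)
    then show "\<exists>P\<in>{block_word oP c, block_word oQ c}. pattern_of e f = P" by simp
  qed
  ultimately show ?thesis by (simp add: PQ_clique_def)
qed

lemma inj_on_matching_of: "inj_on matching_of {\<pi>. \<pi> permutes {..<k}}"
proof (rule inj_onI)
  fix \<pi> \<pi>' assume "\<pi> \<in> {\<pi>. \<pi> permutes {..<k}}" "\<pi>' \<in> {\<pi>. \<pi> permutes {..<k}}"
    and eq: "matching_of \<pi> = matching_of \<pi>'"
  then have \<pi>: "\<pi> permutes {..<k}" "\<pi>' permutes {..<k}" by auto
  show "\<pi> = \<pi>'"
  proof
    fix a
    show "\<pi> a = \<pi>' a"
    proof (cases "a < k")
      case True
      then have "edge (slot a (\<pi> a)) \<in> matching_of \<pi>'" using eq by (auto simp: matching_of_def)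
      then obtain a' where a': "a' < k" "edge (slot a (\<pi> a)) = edge (slot a' (\<pi>' a'))"
        by (auto simp: matching_of_def)
      have "a = a'" "\<pi> a = \<pi>' a'"
        using edge_eqD[OF valid_slots_perm[OF \<pi>(1) True] valid_slots_perm[OF \<pi>(2) a'(1)] a'(2)]
          length_c_pos j(1) by fastforce+
      then show ?thesis by simp
    qed (simp add: permutes_not_in[OF \<pi>(1)] permutes_not_in[OF \<pi>(2)])
  qed
qed

definition orientation :: "nat set \<Rightarrow> nat set \<Rightarrow> bool list" where
  "orientation e f = (if pattern_of e f = block_word oP c then oP else oQ)"

text \<open>Whether the \<open>g\<close>-th block of \<open>f\<close> lies before that of \<open>e\<close>: the pattern of \<open>e\<close>
  and \<open>f\<close> reads \<open>f\<close> as \<open>A\<close> iff \<open>Min f < Min e\<close>, and its \<open>g\<close>-th block starts with \<open>A\<close> iff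
  \<open>orientation e f ! g\<close>.\<close>
definition precedes :: "nat set \<Rightarrow> nat set \<Rightarrow> nat \<Rightarrow> bool" where
  "precedes f e g \<longleftrightarrow> (Min f < Min e \<longleftrightarrow> orientation e f ! g)"

definition slot_in :: "nat set set \<Rightarrow> nat set \<Rightarrow> nat \<Rightarrow> nat" where
  "slot_in M e g = card {f \<in> M - {e}. precedes f e g}"

lemma orientation_cases: "orientation e f = oP \<or> orientation e f = oQ"
  by (simp add: orientation_def)

lemma length_orientation: "length (orientation e f) = length c"
  using length_oP length_oQ by (simp add: orientation_def)

lemma PQ_cliqueD:
  assumes "PQ_clique M"
  shows "finite M" "card M = k"
    and "e \<in> M \<Longrightarrow> e \<subseteq> {1..r * k}" "e \<in> M \<Longrightarrow> card e = r"
    and "e \<in> M \<Longrightarrow> finite e" "e \<in> M \<Longrightarrow> e \<noteq> {}"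
    and "pairwise disjnt M"
    and "e \<in> M \<Longrightarrow> f \<in> M \<Longrightarrow> e \<noteq> f \<Longrightarrow> e \<inter> f = {}"
    and "e \<in> M \<Longrightarrow> f \<in> M \<Longrightarrow> e \<noteq> f \<Longrightarrow> pattern_of e f = block_word (orientation e f) c"
  using assms r_pos unfolding PQ_clique_def ordered_matching_def is_clique_def forms_def
     pairwise_def disjnt_def orientation_def
  by (auto intro: finite_subset)

lemma PQ_clique_Union: "PQ_clique M \<Longrightarrow> \<Union>M = {1..r * k}"
proof -
  assume M: "PQ_clique M"
  have "card (\<Union>M) = sum card M"
    using PQ_cliqueD[OF M] by (intro card_Union_disjoint) auto
  also have "\<dots> = card {1..r * k}" using PQ_cliqueD[OF M] by simp
  finally show ?thesis
    using PQ_cliqueD(3)[OF M] by (intro card_subset_eq) auto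
qed

lemma rank_in_clique:
  assumes M: "PQ_clique M" and ef: "e \<in> M" "f \<in> M" "e \<noteq> f" and x: "x \<in> e"
  shows "rank f x = block_start c (block_of c (rank e x))
    + (if precedes f e (block_of c (rank e x)) then c ! block_of c (rank e x) else 0)"
proof -
  let ?o = "orientation e f" and ?g = "block_of c (rank e x)"
  note D = PQ_cliqueD[OF M]
  have "Min e \<in> e" "Min f \<in> f" using D ef by simp_all
  then have "Min e \<noteq> Min f" using D(8)[OF ef] by auto
  moreover have "?g < length c" using block_bounds rank_less_card[of e x] D ef x by simp
  moreover have "rank f x = b_before (if Min e < Min f then ?o else map Not ?o) c (rank e x)"
    using pattern_of_eq_block_word_iff[of e f c ?o] D ef x sum_c length_orientation by simp
  ultimately show ?thesis
    using length_orientation by (auto simp: b_before_def precedes_def)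
qed

lemma slot_in_less: "PQ_clique M \<Longrightarrow> e \<in> M \<Longrightarrow> slot_in M e g < k"
proof -
  assume M: "PQ_clique M" and e: "e \<in> M"
  have "slot_in M e g \<le> card (M - {e})"
    unfolding slot_in_def using PQ_cliqueD(1)[OF M] by (intro card_mono) auto
  also have "\<dots> < k"
  proof -
    have "0 < card M" using PQ_cliqueD(1)[OF M] e by (auto simp: card_gt_0_iff)
    then show ?thesis using PQ_cliqueD(1,2)[OF M] e by (simp add: card_Diff_singleton)
  qed
  finally show ?thesis .
qed

lemma valid_slots_slot_in: "PQ_clique M \<Longrightarrow> e \<in> M \<Longrightarrow> valid_slots (slot_in M e)"
  by (simp add: valid_slots_def slot_in_less)

text \<open>The \<open>x - 1\<close> numbers below \<open>x\<close> are counted edge by edge with \<open>rank_in_clique\<close>.\<close>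
lemma elem_eq_edge_elem:
  assumes M: "PQ_clique M" and e: "e \<in> M" and x: "x \<in> e"
  shows "x = edge_elem (slot_in M e) (rank e x)"
proof -
  let ?q = "rank e x"
  let ?g = "block_of c ?q"
  note D = PQ_cliqueD[OF M]
  have "x \<in> {1..r * k}" using D(3)[OF e] x by blast
  then have "x - 1 = rank {1..r * k} x" by (rule rank_atLeastAtMost[symmetric])
  also have "\<dots> = rank (\<Union>M) x" using PQ_clique_Union[OF M] by simp
  also have "\<dots> = (\<Sum>f\<in>M. rank f x)"
    using D by (intro rank_Union_disjoint) auto
  also have "\<dots> = ?q + (\<Sum>f\<in>M - {e}. rank f x)"
    using D(1) e by (simp add: sum.remove)
  also have "(\<Sum>f\<in>M - {e}. rank f x)
      = (\<Sum>f\<in>M - {e}. block_start c ?g + (if precedes f e ?g then c ! ?g else 0))"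
    by (intro sum.cong refl rank_in_clique[OF M e _ _ x]) auto
  also have "\<dots> = (k - 1) * block_start c ?g + c ! ?g * slot_in M e ?g"
    using D(1,2) e by (simp add: sum.distrib sum.If_cases slot_in_def Int_def)
  finally have "x - 1 = ?q + ((k - 1) * block_start c ?g + c ! ?g * slot_in M e ?g)" .
  moreover have "x \<ge> 1" using \<open>x \<in> {1..r * k}\<close> by simp
  moreover have "k * block_start c ?g = block_start c ?g + (k - 1) * block_start c ?g"
    using D(1,2) e by (cases k) (auto simp: card_gt_0_iff)
  moreover have "block_start c ?g \<le> ?q"
    using block_bounds[of ?q] rank_less_card[of e x] D(4,5)[OF e] x by simp
  ultimately show ?thesis by (simp add: edge_elem_def cell_def)
qed

lemma edge_slot_in: "PQ_clique M \<Longrightarrow> e \<in> M \<Longrightarrow> edge (slot_in M e) = e"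
proof (rule sym, rule card_subset_eq)
  assume M: "PQ_clique M" and e: "e \<in> M"
  show "finite (edge (slot_in M e))" by (simp add: edge_def)
  show "e \<subseteq> edge (slot_in M e)"
    using elem_eq_edge_elem[OF M e] rank_less_card[of e] PQ_cliqueD(4,5)[OF M e]
    unfolding edge_def by (metis image_eqI lessThan_iff subsetI)
  show "card e = card (edge (slot_in M e))"
    using card_edge[OF valid_slots_slot_in[OF M e]] PQ_cliqueD(4)[OF M e] by simp
qed

lemma precedes_iff:
  "precedes f e g \<longleftrightarrow>
    (if oP ! g = oQ ! g then precedes f e 0 \<longleftrightarrow> oP ! g else precedes f e j \<longleftrightarrow> (oP ! g \<longleftrightarrow> oP ! j))"
  using orientation_cases[of e f] oP_0 oQ_0 j(2) unfolding precedes_def by auto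

lemma slot_in_eq_slot:
  assumes M: "PQ_clique M" and e: "e \<in> M"
  shows "slot_in M e g = slot (slot_in M e 0) (slot_in M e j) g"
proof -
  have fin: "finite (M - {e})" and card: "card (M - {e}) = k - 1"
    using PQ_cliqueD(1,2)[OF M] e by simp_all
  show ?thesis
  proof (cases "oP ! g = oQ ! g")
    case True
    then have "slot_in M e g = card {f \<in> M - {e}. precedes f e 0 = oP ! g}"
      unfolding slot_in_def by (subst precedes_iff) simp
    then show ?thesis using True card_filter_eq[OF fin] card by (simp add: slot_def slot_in_def)
  next
    case False
    then have "slot_in M e g = card {f \<in> M - {e}. precedes f e j = (oP ! g \<longleftrightarrow> oP ! j)}"
      unfolding slot_in_def by (subst precedes_iff) simp
    then show ?thesis using False card_filter_eq[OF fin] card by (simp add: slot_def slot_in_def)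
  qed
qed

lemma bij_betw_slot_in:
  assumes M: "PQ_clique M" and g: "g < length c"
  shows "bij_betw (\<lambda>e. slot_in M e g) M {..<k}"
proof -
  have inj: "inj_on (\<lambda>e. slot_in M e g) M"
  proof (rule inj_onI)
    fix e e' assume e: "e \<in> M" "e' \<in> M" and eq: "slot_in M e g = slot_in M e' g"
    have "block_start c g < r" using block_start_less_sum_list[OF g c_nth_pos[OF g]] sum_c by simp
    then have "edge_elem p (block_start c g) \<in> edge p" for p by (simp add: edge_def)
    moreover have
      "edge_elem (slot_in M e) (block_start c g) = edge_elem (slot_in M e') (block_start c g)"
      using eq by (simp add: edge_elem_block_start[OF g])
    ultimately have "edge_elem (slot_in M e) (block_start c g) \<in> e \<inter> e'"
      using edge_slot_in[OF M] e by (metis IntI)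
    then show "e = e'" using PQ_cliqueD(8)[OF M e] by blast
  qed
  moreover have "(\<lambda>e. slot_in M e g) ` M = {..<k}"
    using slot_in_less[OF M] card_image[OF inj] PQ_cliqueD(2)[OF M]
    by (intro card_subset_eq) auto
  ultimately show ?thesis by (simp add: bij_betw_def)
qed

lemma PQ_clique_imp_matching_of:
  assumes M: "PQ_clique M"
  obtains \<pi> where "\<pi> permutes {..<k}" "matching_of \<pi> = M"
proof -
  let ?e = "inv_into M (\<lambda>e. slot_in M e 0)"
  define \<pi> where "\<pi> a = (if a < k then slot_in M (?e a) j else a)" for a
  have bij0: "bij_betw ?e {..<k} M"
    using bij_betw_inv_into[OF bij_betw_slot_in[OF M length_c_pos]] .
  have "bij_betw (\<lambda>a. slot_in M (?e a) j) {..<k} {..<k}"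
    using bij_betw_trans[OF bij0 bij_betw_slot_in[OF M j(1)]] by (simp add: comp_def)
  then have "bij_betw \<pi> {..<k} {..<k}"
    by (rule bij_betw_cong[THEN iffD1, rotated]) (simp add: \<pi>_def)
  then have perm: "\<pi> permutes {..<k}"
    by (rule bij_imp_permutes) (simp add: \<pi>_def)
  have "edge (slot a (\<pi> a)) = ?e a" if "a < k" for a
  proof -
    have e: "?e a \<in> M" "slot_in M (?e a) 0 = a"
      using that bij_betw_inv_into_right[OF bij_betw_slot_in[OF M length_c_pos]]
        bij_betw_apply[OF bij0] by auto
    have "edge (slot a (\<pi> a)) = edge (slot_in M (?e a))"
      by (rule edge_cong) (subst slot_in_eq_slot[OF M e(1)], simp add: \<pi>_def that e)
    also have "\<dots> = ?e a" by (rule edge_slot_in[OF M e(1)])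
    finally show ?thesis .
  qed
  then have "matching_of \<pi> = M"
    using bij_betw_imp_surj_on[OF bij0] by (simp add: matching_of_def)
  with perm show thesis by (rule that)
qed

lemma card_PQ_cliques: "card {M. PQ_clique M} = fact k"
proof -
  have "{M. PQ_clique M} = matching_of ` {\<pi>. \<pi> permutes {..<k}}"
  proof (intro set_eqI iffI)
    fix M assume "M \<in> {M. PQ_clique M}"
    then obtain \<pi> where "\<pi> permutes {..<k}" "matching_of \<pi> = M"
      using PQ_clique_imp_matching_of by blast
    then show "M \<in> matching_of ` {\<pi>. \<pi> permutes {..<k}}" by blast
  qed (auto intro: PQ_clique_matching_of)
  then show ?thesis
    using card_image[OF inj_on_matching_of] card_permutations[of "{..<k}" k] by simp
qed

end

lemma harmoniousE:
  assumes "harmonious r P Q"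
  obtains c oP oQ j where "harmonious_blocks r c oP oQ j"
    and "P = block_word oP c" and "Q = block_word oQ c"
proof -
  obtain c oP oQ where P: "P = block_word oP c" and Q: "Q = block_word oQ c"
    and len: "length oP = length c" "length oQ = length c" and pos: "\<forall>t\<in>set c. t > 0"
    using assms unfolding harmonious_def has_composition_def block_word_def by fastforce
  have pat: "is_pattern r P" "is_pattern r Q"
    using assms by (simp_all add: harmonious_def collectable_def)
  then have sum: "sum_list c = r" using length_block_word[OF len(1)] P by (simp add: is_pattern_def)
  have "\<exists>j < length c. oP ! j \<noteq> oQ ! j"
  proof (rule ccontr)
    assume "\<not> (\<exists>j < length c. oP ! j \<noteq> oQ ! j)"
    then have "oP = oQ" using len by (intro nth_equalityI) auto
    then show False using assms P Q by (simp add: harmonious_def)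
  qed
  then obtain j where j: "j < length c" "oP ! j \<noteq> oQ ! j" by blast
  then have "c \<noteq> []" "oP \<noteq> []" "oQ \<noteq> []" using len by auto
  then have "oP ! 0" "oQ ! 0"
    using pat hd_block_word[OF len(1)] hd_block_word[OF len(2)] pos P Q
    by (auto simp: is_pattern_def hd_conv_nth)
  then have "harmonious_blocks r c oP oQ j"
    using len pos sum j by unfold_locales auto
  then show thesis using P Q that by blast
qed

theorem mainTheorem10:
  fixes r k :: nat and P Q :: "bool list"
  assumes "r \<ge> 2" and "harmonious r P Q" and "k \<ge> 1"
  shows "card {M. ordered_matching r k M \<and> is_clique {P, Q} M} = fact k"
proof -
  obtain c oP oQ j where blocks: "harmonious_blocks r c oP oQ j"
    and "P = block_word oP c" and "Q = block_word oQ c"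
    using harmoniousE[OF assms(2)] .
  interpret harmonious_blocks r c oP oQ j k by (fact blocks)
  show ?thesis using card_PQ_cliques by (simp add: PQ_clique_def \<open>P = _\<close> \<open>Q = _\<close>)
qed

end
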